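(* Let $\rho_A,\rho_B\in\mathcal{P}(\mathcal{X})$ with $\mathcal{W}(\rho_A,\rho_B)<\infty$, and let $\rho:[0,1]\to\mathbb{R}^{\mathcal{X}}$ and $m:[0,1]\to\mathbb{R}^{\mathcal{X}\times\mathcal{X}}$ be measurable and optimal, i.e. $\mathcal{E}(\rho,m)=\inf\mathcal{E}=\mathcal{W}(\rho_A,\rho_B)^2$. Then for every $(x,y)\in\mathcal{S}:=\{(x,y)\in\mathcal{X}^2: Q(x,y)>0\}$ one has $m(t,x,y)=-m(t,y,x)$ for almost every $t\in[0,1]$.
   Context: Let $\mathcal{X}$ be a finite set and $Q:\mathcal{X}\times\mathcal{X}\to[0,\infty)$ with $Q(x,x)=0$, the transition rate matrix of an irreducible continuous-time Markov chain which is reversible with respect to its unique stationary distribution $\pi:\mathcal{X}\to(0,1]$, $\sum_x\pi(x)=1$, i.e. $\pi(x)Q(x,y)=\pi(y)Q(y,x)$ for all $x,y$. Let $\mathcal{P}(\mathcal{X})=\{\rho:\mathcal{X}\to[0,\infty):\sum_x\pi(x)\rho(x)=1\}$. Inner products: $\langle\phi,\psi\rangle_\pi=\sum_x\phi(x)\psi(x)\pi(x)$ on $\mathbb{R}^{\mathcal{X}}$, $\langle\Phi,\Psi\rangle_Q=\frac12\sum_{x,y}\Phi(x,y)\Psi(x,y)Q(x,y)\pi(x)$ on $\mathbb{R}^{\mathcal{X}\times\mathcal{X}}$. Discrete gradient $(\nabla_{\mathcal{X}}\psi)(x,y)=\psi(x)-\psi(y)$. An averaging function $\theta:[0,\infty)^2\to[0,\infty)$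 is fixed which is continuous, concave, 1-homogeneous, symmetric, $C^\infty$ on $(0,\infty)^2$, with $\theta(0,s)=\theta(s,0)=0$, $\theta(s,s)=s$, $\theta(s,t)>0$ for $s,t>0$, and $s\mapsto\theta(t,s)$ nondecreasing for each $t$; it is extended by $\theta(s,t)=-\infty$ if $\min\{s,t\}<0$. Define $\alpha:\mathbb{R}^3\to\mathbb{R}\cup\{\infty\}$ by $\alpha(s,t,m)=m^2/\theta(s,t)$ if $\theta(s,t)>0$, $\alpha=0$ if $\theta(s,t)=0$ and $m=0$, and $\alpha=+\infty$ otherwise. The action of measurable $\rho:[0,1]\to\mathbb{R}^{\mathcal{X}}$, $m:[0,1]\to\mathbb{R}^{\mathcal{X}\times\mathcal{X}}$ is $\mathcal{A}(\rho,m)=\frac12\int_0^1\sum_{x,y}\alpha(\rho(t,x),\rho(t,y),m(t,x,y))Q(x,y)\pi(x)\,dt$. The set $\mathcal{CE}(\rho_A,\rho_B)$ consists of all measurable pairs $(\rho,m)$ with $\int_0^1\langle\partial_t\varphi(t,\cdot),\rho(t,\cdot)\rangle_\pi+\langle\nabla_{\mathcal{X}}\varphi(t,\cdot),m(t,\cdot)\rangle_Q\,dt=\langle\varphi(1,\cdot),\rho_B\rangle_\pi-\langle\varphi(0,\cdot),\rho_A\rangle_\pi$ for all $\varphi\in C^1([0,1],\mathbb{R}^{\mathcal{X}})$. The energy is $\mathcal{E}(\rho,m)=\mathcal{A}(\rho,m)$ if $(\rho,m)\in\mathcal{CE}(\rho_A,\rho_B)$ and $+\infty$ otherwise, and $\mathcal{W}(\rho_A,\rho_B)=\sqrt{\inf\mathcal{E}}$.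 *)

theory Defs
  imports "HOL-Analysis.Analysis"
begin

definition markov_setting :: "('x::finite \<Rightarrow> 'x \<Rightarrow> real) \<Rightarrow> ('x \<Rightarrow> real) \<Rightarrow> bool" where
  "markov_setting Q \<pi> \<longleftrightarrow>
     (\<forall>x y. Q x y \<ge> 0) \<and> (\<forall>x. Q x x = 0) \<and>
     (\<forall>x y. (x, y) \<in> {(a, b). Q a b > 0}\<^sup>+) \<and>
     (\<forall>x. \<pi> x > 0) \<and> (\<Sum>x\<in>UNIV. \<pi> x) = 1 \<and>
     (\<forall>y. (\<Sum>x\<in>UNIV. \<pi> x * Q x y) = \<pi> y * (\<Sum>z\<in>UNIV. Q y z)) \<and>
     (\<forall>x y. \<pi> x * Q x y = \<pi> y * Q y x)"

definition prob_densities :: "('x::finite \<Rightarrow> real) \<Rightarrow> ('x \<Rightarrow> real) set" where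
  "prob_densities \<pi> = {\<rho>. (\<forall>x. \<rho> x \<ge> 0) \<and> (\<Sum>x\<in>UNIV. \<pi> x * \<rho> x) = 1}"

definition inner_pi :: "('x::finite \<Rightarrow> real) \<Rightarrow> ('x \<Rightarrow> real) \<Rightarrow> ('x \<Rightarrow> real) \<Rightarrow> real" where
  "inner_pi \<pi> \<phi> \<psi> = (\<Sum>x\<in>UNIV. \<phi> x * \<psi> x * \<pi> x)"

definition inner_Q :: "('x::finite \<Rightarrow> 'x \<Rightarrow> real) \<Rightarrow> ('x \<Rightarrow> real)
    \<Rightarrow> ('x \<Rightarrow> 'x \<Rightarrow> real) \<Rightarrow> ('x \<Rightarrow> 'x \<Rightarrow> real) \<Rightarrow> real" where
  "inner_Q Q \<pi> \<Phi> \<Psi> = (1/2) * (\<Sum>x\<in>UNIV. \<Sum>y\<in>UNIV. \<Phi> x y * \<Psi> x y * Q x y * \<pi> x)"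

definition dgrad :: "('x \<Rightarrow> real) \<Rightarrow> 'x \<Rightarrow> 'x \<Rightarrow> real" where
  "dgrad \<psi> x y = \<psi> x - \<psi> y"

text \<open>C-infinity on a set S of the plane: all iterated partial derivatives
  (indexed by lists of directions, False = first, True = second coordinate)
  exist at every point of S and are continuous on S.\<close>
definition dir2 :: "bool \<Rightarrow> real \<times> real" where
  "dir2 b = (if b then (0, 1) else (1, 0))"

definition smooth2_on :: "(real \<times> real) set \<Rightarrow> (real \<times> real \<Rightarrow> real) \<Rightarrow> bool" where
  "smooth2_on S f \<longleftrightarrow> (\<exists>D :: bool list \<Rightarrow> real \<times> real \<Rightarrow> real.
      D [] = f \<and>
      (\<forall>l. continuous_on S (D l)) \<and>
      (\<forall>l b p. p \<in> S \<longrightarrow>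
          ((\<lambda>h. D l (p + h *\<^sub>R dir2 b)) has_real_derivative D (b # l) p) (at 0)))"

definition averaging_function :: "(real \<Rightarrow> real \<Rightarrow> real) \<Rightarrow> bool" where
  "averaging_function \<theta> \<longleftrightarrow>
     continuous_on ({0..} \<times> {0..}) (\<lambda>p. \<theta> (fst p) (snd p)) \<and>
     concave_on ({0..} \<times> {0..}) (\<lambda>p. \<theta> (fst p) (snd p)) \<and>
     (\<forall>s\<ge>0. \<forall>t\<ge>0. \<theta> s t \<ge> 0) \<and>
     (\<forall>c\<ge>0. \<forall>s\<ge>0. \<forall>t\<ge>0. \<theta> (c * s) (c * t) = c * \<theta> s t) \<and>
     (\<forall>s\<ge>0. \<forall>t\<ge>0. \<theta> s t = \<theta> t s) \<and>
     smooth2_on ({0<..} \<times> {0<..}) (\<lambda>p. \<theta> (fst p) (snd p)) \<and>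
     (\<forall>s\<ge>0. \<theta> 0 s = 0 \<and> \<theta> s 0 = 0) \<and>
     (\<forall>s\<ge>0. \<theta> s s = s) \<and>
     (\<forall>s>0. \<forall>t>0. \<theta> s t > 0) \<and>
     (\<forall>t\<ge>0. mono_on {0..} (\<lambda>s. \<theta> t s))"

text \<open>theta is extended by -infinity when an argument is negative; hence alpha = infinity there.\<close>
definition alpha :: "(real \<Rightarrow> real \<Rightarrow> real) \<Rightarrow> real \<Rightarrow> real \<Rightarrow> real \<Rightarrow> ennreal" where
  "alpha \<theta> s t m =
     (if min s t < 0 then top
      else if \<theta> s t > 0 then ennreal (m\<^sup>2 / \<theta> s t)
      else if \<theta> s t = 0 \<and> m = 0 then 0
      else top)"

definition action :: "(real \<Rightarrow> real \<Rightarrow> real) \<Rightarrow> ('x::finite \<Rightarrow> 'x \<Rightarrow> real) \<Rightarrow> ('x \<Rightarrow> real)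
    \<Rightarrow> (real \<Rightarrow> 'x \<Rightarrow> real) \<Rightarrow> (real \<Rightarrow> 'x \<Rightarrow> 'x \<Rightarrow> real) \<Rightarrow> ennreal" where
  "action \<theta> Q \<pi> \<rho> m =
     (1/2) * (\<integral>\<^sup>+ t. indicator {0..1} t *
        (\<Sum>x\<in>UNIV. \<Sum>y\<in>UNIV. alpha \<theta> (\<rho> t x) (\<rho> t y) (m t x y) * ennreal (Q x y * \<pi> x)) \<partial>lborel)"

definition measurable_pair :: "(real \<Rightarrow> 'x \<Rightarrow> real) \<Rightarrow> (real \<Rightarrow> 'x \<Rightarrow> 'x \<Rightarrow> real) \<Rightarrow> bool" where
  "measurable_pair \<rho> m \<longleftrightarrow>
     (\<forall>x. (\<lambda>t. \<rho> t x) \<in> borel_measurable lborel) \<and>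
     (\<forall>x y. (\<lambda>t. m t x y) \<in> borel_measurable lborel)"

text \<open>Test functions in C^1([0,1], R^X); the time derivative is the (two-sided) derivative.\<close>
definition test_fun :: "(real \<Rightarrow> 'x \<Rightarrow> real) \<Rightarrow> bool" where
  "test_fun \<phi> \<longleftrightarrow> (\<forall>x. (\<lambda>t. \<phi> t x) C1_differentiable_on {0..1})"

definition CE :: "('x::finite \<Rightarrow> 'x \<Rightarrow> real) \<Rightarrow> ('x \<Rightarrow> real) \<Rightarrow> ('x \<Rightarrow> real) \<Rightarrow> ('x \<Rightarrow> real)
    \<Rightarrow> ((real \<Rightarrow> 'x \<Rightarrow> real) \<times> (real \<Rightarrow> 'x \<Rightarrow> 'x \<Rightarrow> real)) set" where
  "CE Q \<pi> \<rho>A \<rho>B = {(\<rho>, m). measurable_pair \<rho> m \<and>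
     (\<forall>\<phi>. test_fun \<phi> \<longrightarrow>
        (let g = (\<lambda>t. inner_pi \<pi> (\<lambda>x. vector_derivative (\<lambda>s. \<phi> s x) (at t)) (\<rho> t)
                      + inner_Q Q \<pi> (dgrad (\<phi> t)) (m t))
         in set_integrable lborel {0..1} g \<and>
            (LINT t:{0..1}|lborel. g t) = inner_pi \<pi> (\<phi> 1) \<rho>B - inner_pi \<pi> (\<phi> 0) \<rho>A))}"

definition energy :: "(real \<Rightarrow> real \<Rightarrow> real) \<Rightarrow> ('x::finite \<Rightarrow> 'x \<Rightarrow> real) \<Rightarrow> ('x \<Rightarrow> real)
    \<Rightarrow> ('x \<Rightarrow> real) \<Rightarrow> ('x \<Rightarrow> real)
    \<Rightarrow> (real \<Rightarrow> 'x \<Rightarrow> real) \<Rightarrow> (real \<Rightarrow> 'x \<Rightarrow> 'x \<Rightarrow> real) \<Rightarrow> ennreal" where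
  "energy \<theta> Q \<pi> \<rho>A \<rho>B \<rho> m =
     (if (\<rho>, m) \<in> CE Q \<pi> \<rho>A \<rho>B then action \<theta> Q \<pi> \<rho> m else top)"

definition energy_inf :: "(real \<Rightarrow> real \<Rightarrow> real) \<Rightarrow> ('x::finite \<Rightarrow> 'x \<Rightarrow> real) \<Rightarrow> ('x \<Rightarrow> real)
    \<Rightarrow> ('x \<Rightarrow> real) \<Rightarrow> ('x \<Rightarrow> real) \<Rightarrow> ennreal" where
  "energy_inf \<theta> Q \<pi> \<rho>A \<rho>B =
     (INF p \<in> {(\<rho>, m). measurable_pair \<rho> m}. energy \<theta> Q \<pi> \<rho>A \<rho>B (fst p) (snd p))"

definition W :: "(real \<Rightarrow> real \<Rightarrow> real) \<Rightarrow> ('x::finite \<Rightarrow> 'x \<Rightarrow> real) \<Rightarrow> ('x \<Rightarrow> real)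
    \<Rightarrow> ('x \<Rightarrow> real) \<Rightarrow> ('x \<Rightarrow> real) \<Rightarrow> ennreal" where
  "W \<theta> Q \<pi> \<rho>A \<rho>B =
     (if energy_inf \<theta> Q \<pi> \<rho>A \<rho>B = top then top
      else ennreal (sqrt (enn2real (energy_inf \<theta> Q \<pi> \<rho>A \<rho>B))))"

end

theory Submission
  imports Defs
begin

text \<open>Replacing a flux \<open>m\<close> by its antisymmetric part \<open>(m - m\<^sup>T)/2\<close> does not change the
  continuity equation: by reversibility, pairing with a discrete gradient only sees the
  antisymmetric part of \<open>m\<close>. On the other hand \<open>2((p - q)/2)\<^sup>2 = p\<^sup>2 + q\<^sup>2 - (p + q)\<^sup>2/2\<close> and \<open>\<theta>\<close>
  is symmetric, so antisymmetrising strictly lowers the action density at every time where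
  the density is finite and \<open>m(t,x,y) \<noteq> -m(t,y,x)\<close> on an edge with \<open>Q(x,y) > 0\<close>.
  Optimality of \<open>m\<close> therefore forces antisymmetry for almost every \<open>t\<close>.\<close>

definition antisym_part :: "('x \<Rightarrow> 'x \<Rightarrow> real) \<Rightarrow> 'x \<Rightarrow> 'x \<Rightarrow> real" where
  "antisym_part M x y = (M x y - M y x) / 2"

definition action_density :: "(real \<Rightarrow> real \<Rightarrow> real) \<Rightarrow> ('x::finite \<Rightarrow> 'x \<Rightarrow> real) \<Rightarrow> ('x \<Rightarrow> real)
    \<Rightarrow> ('x \<Rightarrow> real) \<Rightarrow> ('x \<Rightarrow> 'x \<Rightarrow> real) \<Rightarrow> ennreal" where
  "action_density \<theta> Q \<pi> r M =
     (\<Sum>x\<in>UNIV. \<Sum>y\<in>UNIV. alpha \<theta> (r x) (r y) (M x y) * ennreal (Q x y * \<pi> x))"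

lemma action_eq_integral_action_density:
  "action \<theta> Q \<pi> \<rho> m =
     (1/2) * (\<integral>\<^sup>+ t. indicator {0..1} t * action_density \<theta> Q \<pi> (\<rho> t) (m t) \<partial>lborel)"
  unfolding action_def action_density_def ..

lemma averaging_function_nonneg:
  "averaging_function \<theta> \<Longrightarrow> s \<ge> 0 \<Longrightarrow> t \<ge> 0 \<Longrightarrow> \<theta> s t \<ge> 0"
  unfolding averaging_function_def by auto

lemma averaging_function_commute:
  "averaging_function \<theta> \<Longrightarrow> s \<ge> 0 \<Longrightarrow> t \<ge> 0 \<Longrightarrow> \<theta> t s = \<theta> s t"
  unfolding averaging_function_def by auto

lemma double_square_half_diff_eq:
  fixes p q :: real
  shows "2 * ((p - q) / 2)\<^sup>2 = p\<^sup>2 + q\<^sup>2 - (p + q)\<^sup>2 / 2"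
  by (simp add: power2_eq_square field_simps)

lemma alpha_midpoint_le:
  assumes "averaging_function \<theta>"
  shows "2 * alpha \<theta> s t ((p - q) / 2) \<le> alpha \<theta> s t p + alpha \<theta> t s q"
proof (cases "min s t \<ge> 0 \<and> \<theta> s t > 0")
  case True
  then have sym: "\<theta> t s = \<theta> s t"
    using averaging_function_commute[OF assms] by auto
  define a where "a = ((p - q) / 2)\<^sup>2 / \<theta> s t"
  have "2 * a \<le> p\<^sup>2 / \<theta> s t + q\<^sup>2 / \<theta> s t"
    using True by (simp add: a_def double_square_half_diff_eq add_divide_distrib[symmetric] divide_right_mono)
  then have "ennreal (2 * a) \<le> ennreal (p\<^sup>2 / \<theta> s t) + ennreal (q\<^sup>2 / \<theta> s t)"
    using True by (simp add: ennreal_plus[symmetric] ennreal_leI del: ennreal_plus)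
  moreover have "ennreal (2 * a) = 2 * ennreal a"
    using True by (subst ennreal_mult) (auto simp: a_def)
  ultimately show ?thesis
    using True sym by (simp add: alpha_def a_def min.commute)
next
  case False
  then show ?thesis
    using averaging_function_nonneg[OF assms, of s t] averaging_function_commute[OF assms, of s t]
    by (auto simp: alpha_def min_def not_less)
qed

lemma alpha_midpoint_less:
  assumes "averaging_function \<theta>"
    and finite: "alpha \<theta> s t p + alpha \<theta> t s q \<noteq> \<infinity>" and "p \<noteq> - q"
  shows "2 * alpha \<theta> s t ((p - q) / 2) < alpha \<theta> s t p + alpha \<theta> t s q"
proof -
  have st: "s \<ge> 0" "t \<ge> 0"
    using finite by (auto simp: alpha_def min_def split: if_splits)
  have sym: "\<theta> t s = \<theta> s t"
    using averaging_function_commute[OF assms(1) st] .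
  have pos: "\<theta> s t > 0"
  proof (rule ccontr)
    assume "\<not> \<theta> s t > 0"
    then have "p = 0" "q = 0"
      using finite st sym by (auto simp: alpha_def split: if_splits)
    with \<open>p \<noteq> - q\<close> show False by simp
  qed
  define a where "a = ((p - q) / 2)\<^sup>2 / \<theta> s t"
  have "(p + q)\<^sup>2 > 0"
    using \<open>p \<noteq> - q\<close> by (simp add: add_eq_0_iff)
  then have "2 * a < p\<^sup>2 / \<theta> s t + q\<^sup>2 / \<theta> s t"
    using pos by (simp add: a_def double_square_half_diff_eq add_divide_distrib[symmetric] divide_strict_right_mono)
  then have "ennreal (2 * a) < ennreal (p\<^sup>2 / \<theta> s t) + ennreal (q\<^sup>2 / \<theta> s t)"
    using pos by (simp add: ennreal_plus[symmetric] ennreal_less_iff a_def del: ennreal_plus)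
  moreover have "ennreal (2 * a) = 2 * ennreal a"
    using pos by (subst ennreal_mult) (auto simp: a_def)
  ultimately show ?thesis
    using st pos sym by (simp add: alpha_def a_def min_def)
qed

lemma sum_strict_mono_ex1_ennreal:
  fixes f g :: "'a \<Rightarrow> ennreal"
  assumes "finite A" "\<And>x. x \<in> A \<Longrightarrow> f x \<le> g x" "a \<in> A" "f a < g a" "sum g A \<noteq> \<infinity>"
  shows "sum f A < sum g A"
proof -
  have rest_finite: "sum g (A - {a}) \<noteq> \<infinity>"
    using assms(1,5) sum_mono2[of A "A - {a}" g] by (auto simp: top_unique)
  have "sum f A = f a + sum f (A - {a})"
    using assms(1,3) by (simp add: sum.remove)
  also have "\<dots> \<le> f a + sum g (A - {a})"
    using assms(2) by (intro add_left_mono sum_mono) auto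
  also have "\<dots> < g a + sum g (A - {a})"
    using assms(4) rest_finite by (simp add: add.commute[of _ "sum g (A - {a})"] ennreal_add_left_cancel_less)
  also have "\<dots> = sum g A"
    using assms(1,3) by (simp add: sum.remove)
  finally show ?thesis .
qed

lemma double_action_density:
  assumes reversible: "\<And>x y. \<pi> x * Q x y = \<pi> y * Q y x"
  shows "2 * action_density \<theta> Q \<pi> r M =
    (\<Sum>x\<in>UNIV. \<Sum>y\<in>UNIV.
       (alpha \<theta> (r x) (r y) (M x y) + alpha \<theta> (r y) (r x) (M y x)) * ennreal (Q x y * \<pi> x))"
proof -
  have swap: "(\<Sum>x\<in>UNIV. \<Sum>y\<in>UNIV. alpha \<theta> (r y) (r x) (M y x) * ennreal (Q x y * \<pi> x))
      = action_density \<theta> Q \<pi> r M"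
    unfolding action_density_def
    by (subst sum.swap) (simp add: reversible mult.commute)
  show ?thesis
    by (simp add: distrib_right sum.distrib swap action_density_def[symmetric] mult_2)
qed

lemma action_density_antisym_part_le:
  assumes "averaging_function \<theta>" and "\<And>x y. \<pi> x * Q x y = \<pi> y * Q y x"
  shows "action_density \<theta> Q \<pi> r (antisym_part M) \<le> action_density \<theta> Q \<pi> r M"
proof -
  have "2 * action_density \<theta> Q \<pi> r (antisym_part M) =
      (\<Sum>x\<in>UNIV. \<Sum>y\<in>UNIV. 2 * alpha \<theta> (r x) (r y) (antisym_part M x y) * ennreal (Q x y * \<pi> x))"
    by (simp add: action_density_def sum_distrib_left mult.assoc)
  also have "\<dots> \<le> 2 * action_density \<theta> Q \<pi> r M"
    unfolding double_action_density[OF assms(2)] antisym_part_def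
    by (intro sum_mono mult_right_mono alpha_midpoint_le[OF assms(1)]) auto
  finally show ?thesis
    by (simp add: ennreal_mult_le_mult_iff)
qed

lemma antisym_if_action_density_antisym_part_ge:
  assumes "averaging_function \<theta>" and reversible: "\<And>x y. \<pi> x * Q x y = \<pi> y * Q y x"
    and finite: "action_density \<theta> Q \<pi> r M \<noteq> \<infinity>"
    and ge: "action_density \<theta> Q \<pi> r M \<le> action_density \<theta> Q \<pi> r (antisym_part M)"
    and "Q x y > 0" "\<pi> x > 0"
  shows "M x y = - M y x"
proof (rule ccontr)
  assume "M x y \<noteq> - M y x"
  define w where "w a b = ennreal (Q a b * \<pi> a)" for a b
  define f where "f = (\<lambda>(a, b). 2 * alpha \<theta> (r a) (r b) (antisym_part M a b) * w a b)"
  define g where "g = (\<lambda>(a, b). (alpha \<theta> (r a) (r b) (M a b) + alpha \<theta> (r b) (r a) (M b a)) * w a b)"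
  have sum_UNIV_pairs: "sum h UNIV = (\<Sum>a\<in>UNIV. \<Sum>b\<in>UNIV. h (a, b))" for h :: "'a \<times> 'a \<Rightarrow> ennreal"
    by (simp add: sum.cartesian_product)
  have sum_f: "sum f UNIV = 2 * action_density \<theta> Q \<pi> r (antisym_part M)"
    by (simp add: sum_UNIV_pairs f_def w_def action_density_def sum_distrib_left mult.assoc)
  have sum_g: "sum g UNIV = 2 * action_density \<theta> Q \<pi> r M"
    by (simp add: sum_UNIV_pairs g_def w_def double_action_density[OF reversible])
  have g_finite: "sum g UNIV \<noteq> \<infinity>"
    using finite by (simp add: sum_g ennreal_mult_eq_top_iff)
  have w_pos: "0 < w x y" "w x y < \<infinity>"
    using assms(5,6) by (auto simp: w_def)
  have "g (x, y) \<le> sum g UNIV"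
    by (rule member_le_sum) auto
  then have "g (x, y) \<noteq> \<infinity>"
    using g_finite by (auto simp: top_unique)
  then have "alpha \<theta> (r x) (r y) (M x y) + alpha \<theta> (r y) (r x) (M y x) \<noteq> \<infinity>"
    using w_pos by (auto simp: g_def ennreal_mult_eq_top_iff)
  then have "f (x, y) < g (x, y)"
    unfolding f_def g_def antisym_part_def
    using alpha_midpoint_less[OF assms(1)] \<open>M x y \<noteq> - M y x\<close> w_pos
    by (simp add: ennreal_mult_strict_right_mono)
  moreover have "f p \<le> g p" for p
    unfolding f_def g_def antisym_part_def
    by (auto intro: mult_right_mono alpha_midpoint_le[OF assms(1)] split: prod.split)
  ultimately have "sum f UNIV < sum g UNIV"
    using g_finite by (intro sum_strict_mono_ex1_ennreal[of _ _ _ "(x, y)"]) auto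
  with ge show False
    by (simp add: sum_f sum_g ennreal_mult_le_mult_iff not_le[symmetric])
qed

lemma inner_Q_dgrad_antisym_part:
  assumes reversible: "\<And>x y. \<pi> x * Q x y = \<pi> y * Q y x"
  shows "inner_Q Q \<pi> (dgrad \<phi>) (antisym_part M) = inner_Q Q \<pi> (dgrad \<phi>) M"
proof -
  have swap: "(\<Sum>x\<in>UNIV. \<Sum>y\<in>UNIV. dgrad \<phi> x y * M y x * Q x y * \<pi> x)
      = - (\<Sum>x\<in>UNIV. \<Sum>y\<in>UNIV. dgrad \<phi> x y * M x y * Q x y * \<pi> x)"
  proof -
    have "dgrad \<phi> y x * M x y * Q y x * \<pi> y = - dgrad \<phi> x y * M x y * (\<pi> y * Q y x)" for x y
      by (simp add: dgrad_def algebra_simps)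
    then have "dgrad \<phi> y x * M x y * Q y x * \<pi> y = - (dgrad \<phi> x y * M x y * Q x y * \<pi> x)" for x y
      by (simp add: reversible[of y x] algebra_simps)
    then show ?thesis
      by (subst sum.swap) (simp add: sum_negf)
  qed
  show ?thesis
    unfolding inner_Q_def antisym_part_def
    by (simp add: diff_divide_distrib right_diff_distrib left_diff_distrib sum_subtractf
        sum_divide_distrib[symmetric] swap)
qed

lemma antisym_part_in_CE:
  assumes "\<And>x y. \<pi> x * Q x y = \<pi> y * Q y x" and "(\<rho>, m) \<in> CE Q \<pi> \<rho>A \<rho>B"
  shows "(\<rho>, \<lambda>t. antisym_part (m t)) \<in> CE Q \<pi> \<rho>A \<rho>B"
proof -
  have "measurable_pair \<rho> m"
    using assms(2) by (simp add: CE_def)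
  then have "measurable_pair \<rho> (\<lambda>t. antisym_part (m t))"
    by (auto simp: measurable_pair_def antisym_part_def intro!: borel_measurable_divide borel_measurable_diff)
  with assms show ?thesis
    by (simp add: CE_def inner_Q_dgrad_antisym_part)
qed

lemma borel_measurable_alpha:
  assumes "averaging_function \<theta>"
    and [measurable]: "f \<in> borel_measurable M" "g \<in> borel_measurable M" "h \<in> borel_measurable M"
  shows "(\<lambda>t. alpha \<theta> (f t) (g t) (h t)) \<in> borel_measurable M"
proof -
  \<comment> \<open>\<open>\<theta>\<close> is only continuous on the closed quadrant; clamping the arguments extends it
    continuously to the plane without changing the values \<open>alpha\<close> reads.\<close>
  define \<theta>\<^sub>c where "\<theta>\<^sub>c p = \<theta> (max (fst p) 0) (max (snd p) 0)" for p :: "real \<times> real"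
  have "continuous_on UNIV ((\<lambda>p. \<theta> (fst p) (snd p)) \<circ> (\<lambda>p. (max (fst p) 0, max (snd p) 0)))"
    using assms(1) unfolding averaging_function_def
    by (intro continuous_on_compose continuous_intros) (auto elim: continuous_on_subset)
  then have [measurable]: "\<theta>\<^sub>c \<in> borel_measurable borel"
    by (intro borel_measurable_continuous_onI) (simp add: \<theta>\<^sub>c_def o_def)
  have "alpha \<theta> (f t) (g t) (h t) =
     (if min (f t) (g t) < 0 then \<infinity>
      else if \<theta>\<^sub>c (f t, g t) > 0 then ennreal ((h t)\<^sup>2 / \<theta>\<^sub>c (f t, g t))
      else if \<theta>\<^sub>c (f t, g t) = 0 \<and> h t = 0 then 0
      else \<infinity>)" for t
    by (simp add: alpha_def \<theta>\<^sub>c_def)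
  then show ?thesis
    by simp
qed

lemma borel_measurable_action_density:
  assumes "averaging_function \<theta>" and "measurable_pair \<rho> m"
  shows "(\<lambda>t. action_density \<theta> Q \<pi> (\<rho> t) (m t)) \<in> borel_measurable lborel"
  using assms unfolding action_density_def measurable_pair_def
  by (intro borel_measurable_sum borel_measurable_times_ennreal borel_measurable_alpha borel_measurable_const) auto

lemma AE_le_if_nn_integral_le:
  assumes [measurable]: "f \<in> borel_measurable M" "g \<in> borel_measurable M"
    and "AE x in M. g x \<le> f x" and "integral\<^sup>N M g \<noteq> \<infinity>" and "integral\<^sup>N M f \<le> integral\<^sup>N M g"
  shows "AE x in M. f x \<le> g x"
proof -
  have "(\<integral>\<^sup>+ x. f x - g x \<partial>M) = integral\<^sup>N M f - integral\<^sup>N M g"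
    using assms by (intro nn_integral_diff) auto
  also have "\<dots> = 0"
    using assms(4,5) by (auto simp: diff_eq_0_iff_ennreal less_top intro: le_less_trans)
  finally have "AE x in M. f x - g x = 0"
    by (subst (asm) nn_integral_0_iff_AE) auto
  then show ?thesis
    by eventually_elim (rule ennreal_minus_eq_0)
qed

lemma AE_action_density_le_if_action_le:
  assumes "averaging_function \<theta>" and "measurable_pair \<rho> m" "measurable_pair \<rho> m'"
    and le: "\<And>t. action_density \<theta> Q \<pi> (\<rho> t) (m' t) \<le> action_density \<theta> Q \<pi> (\<rho> t) (m t)"
    and finite: "action \<theta> Q \<pi> \<rho> m \<noteq> \<infinity>" and ge: "action \<theta> Q \<pi> \<rho> m \<le> action \<theta> Q \<pi> \<rho> m'"
  shows "AE t in lborel. t \<in> {0..1} \<longrightarrow>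
    action_density \<theta> Q \<pi> (\<rho> t) (m t) \<le> action_density \<theta> Q \<pi> (\<rho> t) (m' t) \<and>
    action_density \<theta> Q \<pi> (\<rho> t) (m t) \<noteq> \<infinity>"
proof -
  define D where "D \<mu> t = indicator {0..1} t * action_density \<theta> Q \<pi> (\<rho> t) (\<mu> t)" for \<mu> t
  have [measurable]: "D \<mu> \<in> borel_measurable lborel" if "measurable_pair \<rho> \<mu>" for \<mu>
    unfolding D_def using borel_measurable_action_density[OF assms(1) that] by measurable
  have action_D: "action \<theta> Q \<pi> \<rho> \<mu> = (1/2) * integral\<^sup>N lborel (D \<mu>)" for \<mu>
    unfolding action_eq_integral_action_density D_def ..
  have D_finite: "integral\<^sup>N lborel (D m) \<noteq> \<infinity>"
    using finite by (simp add: action_D ennreal_mult_eq_top_iff)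
  have "AE t in lborel. D m t \<le> D m' t"
  proof (rule AE_le_if_nn_integral_le)
    show "AE t in lborel. D m' t \<le> D m t"
      by (simp add: D_def le mult_left_mono)
    have "integral\<^sup>N lborel (D m') \<le> integral\<^sup>N lborel (D m)"
      by (intro nn_integral_mono) (simp add: D_def le mult_left_mono)
    then show "integral\<^sup>N lborel (D m') \<noteq> \<infinity>"
      using D_finite by (auto simp: top_unique)
    show "integral\<^sup>N lborel (D m) \<le> integral\<^sup>N lborel (D m')"
      using ge by (simp add: action_D ennreal_mult_le_mult_iff divide_ennreal_def)
  qed (use assms(2,3) in auto)
  moreover have "AE t in lborel. D m t \<noteq> \<infinity>"
    using D_finite assms(2) by (intro nn_integral_PInf_AE) auto
  ultimately show ?thesis
    by eventually_elim (auto simp: D_def)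
qed

lemma action_le_if_energy_optimal:
  assumes "energy \<theta> Q \<pi> \<rho>A \<rho>B \<rho> m = energy_inf \<theta> Q \<pi> \<rho>A \<rho>B"
    and "(\<rho>, m') \<in> CE Q \<pi> \<rho>A \<rho>B"
  shows "energy \<theta> Q \<pi> \<rho>A \<rho>B \<rho> m \<le> action \<theta> Q \<pi> \<rho> m'"
proof -
  have "measurable_pair \<rho> m'"
    using assms(2) by (simp add: CE_def)
  then have "energy_inf \<theta> Q \<pi> \<rho>A \<rho>B \<le> energy \<theta> Q \<pi> \<rho>A \<rho>B \<rho> m'"
    unfolding energy_inf_def by (intro INF_lower2[of "(\<rho>, m')"]) auto
  with assms show ?thesis
    by (simp add: energy_def)
qed

theorem lemma2p4:
  fixes Q :: "'x::finite \<Rightarrow> 'x \<Rightarrow> real" and \<pi> :: "'x \<Rightarrow> real"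
    and \<theta> :: "real \<Rightarrow> real \<Rightarrow> real"
    and \<rho>A \<rho>B :: "'x \<Rightarrow> real"
    and \<rho> :: "real \<Rightarrow> 'x \<Rightarrow> real" and m :: "real \<Rightarrow> 'x \<Rightarrow> 'x \<Rightarrow> real"
  assumes "markov_setting Q \<pi>"
    and "averaging_function \<theta>"
    and "\<rho>A \<in> prob_densities \<pi>" and "\<rho>B \<in> prob_densities \<pi>"
    and "W \<theta> Q \<pi> \<rho>A \<rho>B < top"
    and "measurable_pair \<rho> m"
    and "energy \<theta> Q \<pi> \<rho>A \<rho>B \<rho> m = energy_inf \<theta> Q \<pi> \<rho>A \<rho>B"
    and "energy \<theta> Q \<pi> \<rho>A \<rho>B \<rho> m = (W \<theta> Q \<pi> \<rho>A \<rho>B)\<^sup>2"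
  shows "\<forall>x y. Q x y > 0 \<longrightarrow> (AE t in lborel. t \<in> {0..1} \<longrightarrow> m t x y = - m t y x)"
proof (intro allI impI)
  fix x y assume "Q x y > 0"
  have reversible: "\<And>x y. \<pi> x * Q x y = \<pi> y * Q y x" and "\<pi> x > 0"
    using assms(1) by (auto simp: markov_setting_def)
  define m' where "m' t = antisym_part (m t)" for t
  have "energy \<theta> Q \<pi> \<rho>A \<rho>B \<rho> m \<noteq> \<infinity>"
    using assms(5,8) by (simp add: power2_eq_square ennreal_mult_eq_top_iff)
  then have CE: "(\<rho>, m) \<in> CE Q \<pi> \<rho>A \<rho>B" and finite: "action \<theta> Q \<pi> \<rho> m \<noteq> \<infinity>"
    and energy: "energy \<theta> Q \<pi> \<rho>A \<rho>B \<rho> m = action \<theta> Q \<pi> \<rho> m"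
    by (auto simp: energy_def split: if_splits)
  have CE': "(\<rho>, m') \<in> CE Q \<pi> \<rho>A \<rho>B"
    unfolding m'_def using antisym_part_in_CE[OF reversible CE] .
  have "AE t in lborel. t \<in> {0..1} \<longrightarrow>
      action_density \<theta> Q \<pi> (\<rho> t) (m t) \<le> action_density \<theta> Q \<pi> (\<rho> t) (m' t) \<and>
      action_density \<theta> Q \<pi> (\<rho> t) (m t) \<noteq> \<infinity>"
  proof (rule AE_action_density_le_if_action_le[OF assms(2,6)])
    show "measurable_pair \<rho> m'"
      using CE' by (simp add: CE_def)
    show "action_density \<theta> Q \<pi> (\<rho> t) (m' t) \<le> action_density \<theta> Q \<pi> (\<rho> t) (m t)" for t
      unfolding m'_def by (rule action_density_antisym_part_le[OF assms(2) reversible])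
    show "action \<theta> Q \<pi> \<rho> m \<le> action \<theta> Q \<pi> \<rho> m'"
      using action_le_if_energy_optimal[OF assms(7) CE'] energy by simp
  qed (rule finite)
  then show "AE t in lborel. t \<in> {0..1} \<longrightarrow> m t x y = - m t y x"
    by eventually_elim (use antisym_if_action_density_antisym_part_ge[OF assms(2) reversible]
        \<open>Q x y > 0\<close> \<open>\<pi> x > 0\<close> in \<open>auto simp: m'_def\<close>)
qed

end
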